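(* Let $X_1$ and $X_2$ be two elliptic ovoids of $Q_0$ which are tangent, and let $x\in X_1\setminus X_2$. Then there exists a unique elliptic ovoid of $Q_0$ containing $x$ which is tangent to both $X_1$ and $X_2$.
   Context: Let $q=2^n$ and let $Q_0\cong Q(4,q)$ be the parabolic quadric generalized quadrangle in $\mathrm{PG}(4,q)$. An elliptic ovoid of $Q_0$ is a set $X=S\cap Q_0$ where $S$ is a $3$-dimensional projective subspace meeting $Q_0$ in an elliptic quadric $Q^-(3,q)$. Two distinct elliptic ovoids meet either in exactly one point (then they are called tangent) or in a non-degenerate conic. *)

theory Defs
  imports "HOL-Analysis.Finite_Cartesian_Product"
begin

text \<open>Vectors of the underlying 5-dimensional vector space V(5,q) of PG(4,q)
  are elements of type 'a ^ 5, for a finite field 'a.\<close>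

definition smul5 :: "'a::field \<Rightarrow> 'a ^ 5 \<Rightarrow> 'a ^ 5" where
  "smul5 c v = (\<chi> i. c * v $ i)"

definition proj_pt :: "'a::field ^ 5 \<Rightarrow> ('a ^ 5) set" where
  "proj_pt v = {smul5 c v | c. c \<noteq> 0}"

text \<open>The parabolic quadric Q_0 = Q(4,q) in canonical form x0^2 + x1 x2 + x3 x4.\<close>
definition Qf :: "'a::field ^ 5 \<Rightarrow> 'a" where
  "Qf v = v $ 0 ^ 2 + v $ 1 * v $ 2 + v $ 3 * v $ 4"

definition Bf :: "'a::field ^ 5 \<Rightarrow> 'a ^ 5 \<Rightarrow> 'a" where
  "Bf u v = Qf (u + v) - Qf u - Qf v"

definition dot5 :: "'a::field ^ 5 \<Rightarrow> 'a ^ 5 \<Rightarrow> 'a" where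
  "dot5 a v = (\<Sum>i\<in>UNIV. a $ i * v $ i)"

definition hyp :: "'a::field ^ 5 \<Rightarrow> ('a ^ 5) set" where
  "hyp a = {v. dot5 a v = 0}"

text \<open>The hyperplane a \<noteq> 0 meets Q_0 in an elliptic quadric Q^-(3,q): the restriction of
  Qf to the hyperplane is a non-degenerate quadric (no singular point) containing no
  line (projective index 0).\<close>
definition elliptic_hyp :: "'a::field ^ 5 \<Rightarrow> bool" where
  "elliptic_hyp a \<longleftrightarrow> a \<noteq> 0
     \<and> (\<forall>v\<in>hyp a. v \<noteq> 0 \<and> Qf v = 0 \<longrightarrow> \<not> (\<forall>w\<in>hyp a. Bf v w = 0))
     \<and> \<not> (\<exists>u v. u \<in> hyp a \<and> v \<in> hyp a \<and> u \<noteq> 0 \<and> (\<forall>c. v \<noteq> smul5 c u)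
              \<and> (\<forall>s t. Qf (smul5 s u + smul5 t v) = 0))"

definition elliptic_ovoid :: "('a::field ^ 5) set set \<Rightarrow> bool" where
  "elliptic_ovoid X \<longleftrightarrow> (\<exists>a. elliptic_hyp a \<and>
      X = {proj_pt v | v. v \<noteq> 0 \<and> v \<in> hyp a \<and> Qf v = 0})"

definition tangent :: "('a ^ 5) set set \<Rightarrow> ('a ^ 5) set set \<Rightarrow> bool" where
  "tangent X Y \<longleftrightarrow> X \<noteq> Y \<and> (\<exists>!p. p \<in> X \<and> p \<in> Y)"

end

theory Submission
  imports Defs
begin

text \<open>
  Since q is even, 2 = 0 in the field.  Write the quadric as Q(v) = v0^2 + phi(v) with
  phi(v) = v1 v2 + v3 v4, and let Bp be the polar form of phi; it only involves the coordinates
  1..4, is alternating, and equals the polar form of Q.  The nucleus e0 of Q lies in no elliptic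
  hyperplane, so every elliptic hyperplane has the form H_b = {v. v0 = Bp b v} and its ovoid is
  the set O_b of singular points of H_b; ellipticity of H_b means that H_b contains no two
  independent orthogonal singular vectors.

  For two distinct hyperplanes H_a, H_c the vector pole a c, with coordinates (Bp a c, a + c),
  lies in H_a and H_c and is orthogonal to their whole intersection.  The central lemma states
  that O_a and O_c are tangent exactly when this pole is singular, the pole being the point of
  tangency (one direction uses ellipticity).  Now let O_b, O_c be tangent and x a singular
  point of H_b outside H_c.  An ovoid O_e through x tangent to O_b has its tangency point at x,
  which forces H_e = H_(b + m x); the pole of b + m x and c is singular iff (m s)^2 + m s = 0
  with s = Bp (b + c) x nonzero, so m = 1/s is the only choice, and it does give an elliptic
  ovoid tangent to both.
\<close>

text \<open>A finite field of order 2^n has characteristic two: translating by 1 permutes the field, so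
  summing x + 1 over all x shows that CARD('a) \<cdot> 1 = 0.\<close>
lemma char2_of_card:
  assumes "CARD('a::{field,finite}) = 2 ^ n"
  shows "(2::'a) = 0"
proof -
  have "bij (\<lambda>x::'a. x + 1)"
    by (rule bij_betw_byWitness[where f' = "\<lambda>x. x - 1"]) auto
  then have "(\<Sum>x\<in>UNIV. x + 1) = (\<Sum>x\<in>UNIV. x :: 'a)"
    by (rule sum.reindex_bij_betw)
  then have "of_nat CARD('a) = (0::'a)"
    by (simp add: sum.distrib)
  then have "(2::'a) ^ n = 0" using assms by simp
  then show ?thesis by simp
qed

lemma char2_add_self: "(2::'a::field) = 0 \<Longrightarrow> x + x = (0::'a)"
  by (metis mult_2 mult_zero_left)

lemma char2_add_eq_0_iff: "(2::'a::field) = 0 \<Longrightarrow> x + y = 0 \<longleftrightarrow> x = (y::'a)"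
  by (metis add_eq_0_iff char2_add_self)

lemma char2_add_eq_iff:
  assumes "(2::'a::field) = 0"
  shows "x + y = z \<longleftrightarrow> x = y + (z::'a)"
proof -
  have "- y = y" using char2_add_self[OF assms, of y] by (simp add: add_eq_0_iff)
  then have "z - y = y + z" by (simp only: diff_conv_add_uminus add.commute)
  moreover have "x + y = z \<longleftrightarrow> x = z - y" by (rule eq_diff_eq[symmetric])
  ultimately show ?thesis by (simp only:)
qed

text \<open>In a finite field of characteristic two the Frobenius map is bijective, so every element
  is a square.  This is what places the nucleus outside every elliptic hyperplane.\<close>
lemma char2_square_surj:
  assumes c2: "(2::'a::{field,finite}) = 0"
  shows "\<exists>y. y ^ 2 = (x::'a)"
proof -
  have "inj (\<lambda>y::'a. y ^ 2)"
  proof (rule injI)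
    fix y z :: 'a
    assume "y ^ 2 = z ^ 2"
    moreover have "(y + z) ^ 2 = y ^ 2 + z ^ 2 + 2 * (y * z)"
      by (simp add: power2_eq_square algebra_simps)
    ultimately have "(y + z) ^ 2 = 0" using c2 by (simp add: char2_add_self)
    then show "y = z" using c2 by (simp add: char2_add_eq_0_iff)
  qed
  then have "surj (\<lambda>y::'a. y ^ 2)" by (rule finite_UNIV_inj_surj[OF finite])
  then show ?thesis by (metis surjD)
qed

lemma UNIV_5: "(UNIV::5 set) = {0, 1, 2, 3, 4}"
  by (rule card_subset_eq[symmetric]) simp_all

lemma vec5_eq_iff:
  "(u::'a^5) = v \<longleftrightarrow> u$0 = v$0 \<and> u$1 = v$1 \<and> u$2 = v$2 \<and> u$3 = v$3 \<and> u$4 = v$4"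
proof -
  have "(\<forall>i. u$i = v$i) \<longleftrightarrow> (\<forall>i\<in>{0, 1, 2, 3, 4::5}. u$i = v$i)"
    by (simp only: UNIV_5[symmetric] ball_UNIV)
  then show ?thesis by (simp add: vec_eq_iff)
qed

lemma dot5_expand: "dot5 a v = a$0 * v$0 + a$1 * v$1 + a$2 * v$2 + a$3 * v$3 + a$4 * v$4"
  unfolding dot5_def UNIV_5 by (simp add: algebra_simps)

definition mk5 :: "'a \<Rightarrow> 'a \<Rightarrow> 'a \<Rightarrow> 'a \<Rightarrow> 'a \<Rightarrow> 'a^5" where
  "mk5 a b c d e =
     (\<chi> i. if i = 0 then a else if i = 1 then b else if i = 2 then c else if i = 3 then d else e)"

lemma mk5_nth [simp]:
  "mk5 a b c d e $ 0 = a" "mk5 a b c d e $ 1 = b" "mk5 a b c d e $ 2 = c"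
  "mk5 a b c d e $ 3 = d" "mk5 a b c d e $ 4 = e"
  by (simp_all add: mk5_def)

lemma smul5_nth [simp]: "smul5 c v $ i = c * v $ i"
  by (simp add: smul5_def)

lemma smul5_one [simp]: "smul5 1 u = u"
  and smul5_zero [simp]: "smul5 0 u = 0"
  and smul5_smul5 [simp]: "smul5 c (smul5 d u) = smul5 (c * d) u"
  by (simp_all add: vec_eq_iff)

lemma smul5_eq_0_iff [simp]: "smul5 c u = 0 \<longleftrightarrow> c = 0 \<or> u = 0"
  by (auto simp: vec_eq_iff)

lemma proj_pt_self: "v \<in> proj_pt v"
  unfolding proj_pt_def by (rule CollectI, rule exI[of _ 1]) simp

lemma proj_pt_eqD:
  assumes "proj_pt u = proj_pt v"
  shows "\<exists>c. c \<noteq> 0 \<and> u = smul5 c v"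
  using proj_pt_self[of u] assms unfolding proj_pt_def by auto

lemma proj_pt_smul5:
  assumes "c \<noteq> 0"
  shows "proj_pt (smul5 c v) = proj_pt v"
  unfolding proj_pt_def
proof (intro set_eqI iffI)
  fix w assume "w \<in> {smul5 d (smul5 c v) |d. d \<noteq> 0}"
  then obtain d where "d \<noteq> 0" "w = smul5 d (smul5 c v)" by auto
  then show "w \<in> {smul5 d v |d. d \<noteq> 0}" using assms by auto
next
  fix w assume "w \<in> {smul5 d v |d. d \<noteq> 0}"
  then obtain d where "d \<noteq> 0" "w = smul5 d v" by auto
  then show "w \<in> {smul5 d (smul5 c v) |d. d \<noteq> 0}"
    using assms by (auto intro!: exI[of _ "d / c"])
qed

section \<open>The quadric in characteristic two\<close>

text \<open>In characteristic two
  Bp is alternating and coincides with the polar form Bf of Qf, so the nucleus e0 is orthogonal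
  to everything.\<close>
definition phi :: "'a::field^5 \<Rightarrow> 'a" where
  "phi v = v$1 * v$2 + v$3 * v$4"

definition Bp :: "'a::field^5 \<Rightarrow> 'a^5 \<Rightarrow> 'a" where
  "Bp u v = u$1 * v$2 + u$2 * v$1 + u$3 * v$4 + u$4 * v$3"

lemma Qf_expand: "Qf v = (v$0)^2 + phi v"
  by (simp add: Qf_def phi_def)

lemma Bf_char2: "(2::'a::field) = 0 \<Longrightarrow> Bf u v = Bp u (v::'a^5)"
proof -
  assume c2: "(2::'a) = 0"
  have "Bf u v = Bp u v + 2 * (u$0 * v$0)"
    unfolding Bf_def Qf_def Bp_def by (simp add: power2_eq_square algebra_simps)
  then show ?thesis using c2 by simp
qed

lemma Bp_sym: "Bp u v = Bp v u"
  by (simp add: Bp_def algebra_simps)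

lemma Bp_add_left: "Bp (u + v) w = Bp u w + Bp v w"
  and Bp_add_right: "Bp w (u + v) = Bp w u + Bp w v"
  and Bp_smul_left: "Bp (smul5 c u) w = c * Bp u w"
  and Bp_smul_right: "Bp w (smul5 c u) = c * Bp w u"
  by (simp_all add: Bp_def algebra_simps)

lemma Bp_zero [simp]: "Bp 0 w = 0" "Bp w 0 = 0"
  by (simp_all add: Bp_def)

lemma Bp_self: "(2::'a::field) = 0 \<Longrightarrow> Bp u (u::'a^5) = 0"
proof -
  assume "(2::'a) = 0"
  moreover have "Bp u u = 2 * (u$1 * u$2 + u$3 * u$4)" by (simp add: Bp_def algebra_simps)
  ultimately show ?thesis by simp
qed

lemma phi_add: "phi (u + v) = phi u + phi v + Bp u v"
  and phi_smul: "phi (smul5 c u) = c^2 * phi u"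
  by (simp_all add: phi_def Bp_def power2_eq_square algebra_simps)

lemma Qf_smul5: "Qf (smul5 c v) = c^2 * Qf v"
  unfolding Qf_def by (simp add: power2_eq_square algebra_simps)

lemma Qf_lincomb: "Qf (smul5 s u + smul5 t v) = s^2 * Qf u + t^2 * Qf v + s * t * Bf u v"
  unfolding Bf_def Qf_def by (simp add: power2_eq_square algebra_simps)

text \<open>This is the
  nondegeneracy of the symplectic form Bp on these four coordinates.\<close>
lemma Bp_annihilator:
  fixes d r :: "'a::field^5"
  assumes H: "\<And>R. Bp d R = 0 \<Longrightarrow> Bp r R = 0"
    and nz: "d$1 \<noteq> 0 \<or> d$2 \<noteq> 0 \<or> d$3 \<noteq> 0 \<or> d$4 \<noteq> 0"
  shows "\<exists>k. r$1 = k * d$1 \<and> r$2 = k * d$2 \<and> r$3 = k * d$3 \<and> r$4 = k * d$4"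
proof -
  have m12: "r$1 * d$2 = r$2 * d$1"
    using H[of "mk5 0 (-(d$1)) (d$2) 0 0"] by (simp add: Bp_def algebra_simps)
  have m13: "r$1 * d$3 = r$3 * d$1"
    using H[of "mk5 0 0 (d$3) 0 (-(d$1))"] by (simp add: Bp_def algebra_simps)
  have m14: "r$1 * d$4 = r$4 * d$1"
    using H[of "mk5 0 0 (d$4) (-(d$1)) 0"] by (simp add: Bp_def algebra_simps)
  have m23: "r$2 * d$3 = r$3 * d$2"
    using H[of "mk5 0 (d$3) 0 0 (-(d$2))"] by (simp add: Bp_def algebra_simps)
  have m24: "r$2 * d$4 = r$4 * d$2"
    using H[of "mk5 0 (d$4) 0 (-(d$2)) 0"] by (simp add: Bp_def algebra_simps)
  have m34: "r$3 * d$4 = r$4 * d$3"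
    using H[of "mk5 0 0 0 (-(d$3)) (d$4)"] by (simp add: Bp_def algebra_simps)
  from nz show ?thesis
  proof (elim disjE)
    assume "d$1 \<noteq> 0"
    then show ?thesis using m12 m13 m14 by (intro exI[of _ "r$1 / d$1"]) (simp add: field_simps)
  next
    assume "d$2 \<noteq> 0"
    then show ?thesis using m12 m23 m24 by (intro exI[of _ "r$2 / d$2"]) (simp add: field_simps)
  next
    assume "d$3 \<noteq> 0"
    then show ?thesis using m13 m23 m34 by (intro exI[of _ "r$3 / d$3"]) (simp add: field_simps)
  next
    assume "d$4 \<noteq> 0"
    then show ?thesis using m14 m24 m34 by (intro exI[of _ "r$4 / d$4"]) (simp add: field_simps)
  qed
qed

text \<open>The hyperplane v0 = Bp b v; it depends only on the coordinates 1..4 of b.\<close>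
definition hypB :: "'a::field^5 \<Rightarrow> ('a^5) set" where
  "hypB b = {v. v$0 = Bp b v}"

definition lift :: "'a::field^5 \<Rightarrow> 'a^5 \<Rightarrow> 'a^5" where
  "lift b u = mk5 (Bp b u) (u$1) (u$2) (u$3) (u$4)"

lemma Bp_lift_left: "Bp (lift b u) v = Bp u v"
  and Bp_lift_right: "Bp v (lift b u) = Bp v u"
  by (simp_all add: Bp_def lift_def)

lemma lift_nth0: "(lift b u)$0 = Bp b u"
  by (simp add: lift_def)

lemma lift_in_hypB_iff: "lift a u \<in> hypB b \<longleftrightarrow> Bp a u = Bp b u"
  by (simp add: hypB_def lift_nth0 Bp_lift_right)

lemma lift_in_hypB: "lift b u \<in> hypB b"
  by (simp add: lift_in_hypB_iff)

lemma Qf_lift: "Qf (lift b u) = (Bp b u)^2 + phi u"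
  by (simp add: Qf_expand lift_def phi_def)

lemma Qf_hypB: "v \<in> hypB b \<Longrightarrow> Qf v = (Bp b v)^2 + phi v"
  by (simp add: Qf_expand hypB_def)

lemma hypB_smul5: "v \<in> hypB b \<Longrightarrow> smul5 c v \<in> hypB b"
  and hypB_add: "u \<in> hypB b \<Longrightarrow> v \<in> hypB b \<Longrightarrow> u + v \<in> hypB b"
  by (simp_all add: hypB_def Bp_smul_right Bp_add_right)

lemma hypB_cong:
  assumes "e$1 = e'$1" "e$2 = e'$2" "e$3 = e'$3" "e$4 = e'$4"
  shows "hypB e = hypB e'"
  using assms by (simp add: hypB_def Bp_def)

lemma hypB_tail_nonzero:
  assumes "v \<in> hypB b" "v \<noteq> 0"
  shows "v$1 \<noteq> 0 \<or> v$2 \<noteq> 0 \<or> v$3 \<noteq> 0 \<or> v$4 \<noteq> 0"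
  using assms by (auto simp: hypB_def Bp_def vec5_eq_iff)

lemma hypB_perp_proportional:
  assumes u: "u \<in> hypB b" and v: "v \<in> hypB b" "v \<noteq> 0"
    and perp: "\<And>R. Bp v R = 0 \<Longrightarrow> Bp u R = 0"
  shows "\<exists>k. u = smul5 k v"
proof -
  obtain k where k: "u$1 = k * v$1" "u$2 = k * v$2" "u$3 = k * v$3" "u$4 = k * v$4"
    using Bp_annihilator[OF perp hypB_tail_nonzero[OF v]] by blast
  then have "Bp b u = k * Bp b v" by (simp add: Bp_def algebra_simps)
  then have "u$0 = k * v$0" using u v by (simp add: hypB_def)
  then show ?thesis using k by (auto simp: vec5_eq_iff)
qed

text \<open>No nonzero vector of hypB b is orthogonal to the whole hyperplane, since the vectors
  lift b R realise every possible tail R.\<close>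
lemma hypB_nondegenerate:
  assumes v: "v \<in> hypB b" "v \<noteq> 0"
  shows "\<exists>w\<in>hypB b. Bp v w \<noteq> 0"
proof (rule ccontr)
  assume "\<not> ?thesis"
  then have "Bp v R = 0" for R using lift_in_hypB[of b R] by (auto simp: Bp_lift_right)
  from this[of "mk5 0 0 1 0 0"] this[of "mk5 0 1 0 0 0"] this[of "mk5 0 0 0 0 1"]
    this[of "mk5 0 0 0 1 0"]
  have "v$1 = 0 \<and> v$2 = 0 \<and> v$3 = 0 \<and> v$4 = 0" by (simp add: Bp_def)
  then show False using hypB_tail_nonzero[OF v] by simp
qed

section \<open>Elliptic hyperplanes and their ovoids\<close>

definition ovoid_of :: "'a::field^5 \<Rightarrow> ('a^5) set set" where
  "ovoid_of b = {proj_pt v | v. v \<noteq> 0 \<and> v \<in> hypB b \<and> Qf v = 0}"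

lemma proj_pt_in_ovoid_of: "proj_pt w \<in> ovoid_of b \<longleftrightarrow> w \<noteq> 0 \<and> w \<in> hypB b \<and> Qf w = 0"
proof
  assume "proj_pt w \<in> ovoid_of b"
  then obtain v where v: "proj_pt w = proj_pt v" "v \<noteq> 0" "v \<in> hypB b" "Qf v = 0"
    unfolding ovoid_of_def by auto
  then obtain c where "c \<noteq> 0" "w = smul5 c v" using proj_pt_eqD by blast
  then show "w \<noteq> 0 \<and> w \<in> hypB b \<and> Qf w = 0" using v by (simp add: Qf_smul5 hypB_smul5)
qed (auto simp: ovoid_of_def)

lemma ovoid_of_elem:
  assumes "p \<in> ovoid_of b"
  obtains v where "p = proj_pt v" "v \<noteq> 0" "v \<in> hypB b" "Qf v = 0"
  using assms unfolding ovoid_of_def by auto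

text \<open>Ellipticity of hypB b in terms of the polar form: two orthogonal singular vectors would
  span a totally singular line, so they must be proportional.\<close>
definition no_singular_line :: "'a::field^5 \<Rightarrow> bool" where
  "no_singular_line b \<longleftrightarrow> (\<forall>z\<in>hypB b. \<forall>y\<in>hypB b.
     z \<noteq> 0 \<and> Qf z = 0 \<and> Qf y = 0 \<and> Bp z y = 0 \<longrightarrow> (\<exists>c. y = smul5 c z))"

lemma no_singular_lineD:
  assumes "no_singular_line b" "z \<in> hypB b" "y \<in> hypB b" "z \<noteq> 0" "Qf z = 0" "Qf y = 0"
    "Bp z y = 0"
  shows "\<exists>c. y = smul5 c z"
  using assms unfolding no_singular_line_def by blast

text \<open>For a hyperplane avoiding the nucleus the nondegeneracy clause of elliptic_hyp is
  automatic (hypB_nondegenerate), and the absence of singular lines is exactly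
  no_singular_line.\<close>
lemma elliptic_hyp_iff_no_singular_line:
  assumes c2: "(2::'a::field) = 0" and a: "a \<noteq> 0" "hyp a = hypB (b::'a^5)"
  shows "elliptic_hyp a \<longleftrightarrow> no_singular_line b"
proof -
  have nondegenerate: "\<forall>v\<in>hypB b. v \<noteq> 0 \<and> Qf v = 0 \<longrightarrow> \<not> (\<forall>w\<in>hypB b. Bf v w = 0)"
    using hypB_nondegenerate by (auto simp: Bf_char2[OF c2])
  have "(\<exists>u v. u \<in> hypB b \<and> v \<in> hypB b \<and> u \<noteq> 0 \<and> (\<forall>c. v \<noteq> smul5 c u)
           \<and> (\<forall>s t. Qf (smul5 s u + smul5 t v) = 0)) \<longleftrightarrow> \<not> no_singular_line b"
  proof
    assume "\<exists>u v. u \<in> hypB b \<and> v \<in> hypB b \<and> u \<noteq> 0 \<and> (\<forall>c. v \<noteq> smul5 c u)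
              \<and> (\<forall>s t. Qf (smul5 s u + smul5 t v) = 0)"
    then obtain u v where uv: "u \<in> hypB b" "v \<in> hypB b" "u \<noteq> 0" "\<forall>c. v \<noteq> smul5 c u"
      and line: "\<And>s t. Qf (smul5 s u + smul5 t v) = 0" by blast
    have "Qf u = 0" "Qf v = 0" using line[of 1 0] line[of 0 1] by simp_all
    moreover have "Bp u v = 0"
      using line[of 1 1] Qf_lincomb[of 1 u 1 v] \<open>Qf u = 0\<close> \<open>Qf v = 0\<close>
      by (simp add: Bf_char2[OF c2])
    ultimately show "\<not> no_singular_line b" using uv unfolding no_singular_line_def by blast
  next
    assume "\<not> no_singular_line b"
    then obtain z y where zy: "z \<in> hypB b" "y \<in> hypB b" "z \<noteq> 0" "\<forall>c. y \<noteq> smul5 c z"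
      and sing: "Qf z = 0" "Qf y = 0" "Bp z y = 0" unfolding no_singular_line_def by blast
    have "Qf (smul5 s z + smul5 t y) = 0" for s t
      using sing by (simp add: Qf_lincomb Bf_char2[OF c2])
    then show "\<exists>u v. u \<in> hypB b \<and> v \<in> hypB b \<and> u \<noteq> 0 \<and> (\<forall>c. v \<noteq> smul5 c u)
              \<and> (\<forall>s t. Qf (smul5 s u + smul5 t v) = 0)" using zy by blast
  qed
  then show ?thesis unfolding elliptic_hyp_def a(2) using a(1) nondegenerate by blast
qed

text \<open>The nucleus e0 lies in no elliptic hyperplane: otherwise the vector (y, a2, a1, a4, a3),
  with y^2 = a1 a2 + a3 a4, would be a singular vector orthogonal to the whole hyperplane.\<close>
lemma elliptic_hyp_avoids_nucleus:
  assumes c2: "(2::'a::{field,finite}) = 0" and e: "elliptic_hyp (a::'a^5)"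
  shows "a$0 \<noteq> 0"
proof
  assume a0: "a$0 = 0"
  obtain y where y: "y^2 = a$2 * a$1 + a$4 * a$3" using char2_square_surj[OF c2] by blast
  define v where "v = mk5 y (a$2) (a$1) (a$4) (a$3)"
  have "v \<noteq> 0"
  proof
    assume "v = 0"
    then have "a = 0" using a0 unfolding v_def vec5_eq_iff by simp
    then show False using e unfolding elliptic_hyp_def by blast
  qed
  moreover have "v \<in> hyp a"
    using a0 c2 by (simp add: hyp_def dot5_expand v_def algebra_simps flip: mult_2)
  moreover have "Qf v = 0"
    using y c2 by (simp add: Qf_def v_def algebra_simps flip: mult_2)
  moreover have "Bf v w = 0" if "w \<in> hyp a" for w
    using that a0 by (simp add: hyp_def dot5_expand Bf_char2[OF c2] Bp_def v_def algebra_simps)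
  ultimately show False using e unfolding elliptic_hyp_def by blast
qed

definition hypB_coords :: "'a::field^5 \<Rightarrow> 'a^5" where
  "hypB_coords e = mk5 1 (e$2) (e$1) (e$4) (e$3)"

definition hypB_param :: "'a::field^5 \<Rightarrow> 'a^5" where
  "hypB_param a = mk5 0 (a$2 / a$0) (a$1 / a$0) (a$4 / a$0) (a$3 / a$0)"

lemma hyp_hypB_coords:
  assumes c2: "(2::'a::field) = 0"
  shows "hyp (hypB_coords e) = hypB (e::'a^5)"
proof (rule set_eqI)
  fix v :: "'a^5"
  have "v \<in> hyp (hypB_coords e) \<longleftrightarrow> v$0 + Bp e v = 0"
    by (simp add: hyp_def dot5_expand hypB_coords_def Bp_def algebra_simps)
  also have "\<dots> \<longleftrightarrow> v \<in> hypB e" using c2 by (simp add: hypB_def char2_add_eq_0_iff)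
  finally show "v \<in> hyp (hypB_coords e) \<longleftrightarrow> v \<in> hypB e" .
qed

lemma hyp_hypB_param:
  assumes c2: "(2::'a::field) = 0" and a0: "(a::'a^5)$0 \<noteq> 0"
  shows "hyp a = hypB (hypB_param a)"
proof (rule set_eqI)
  fix v :: "'a^5"
  let ?S = "a$1 * v$1 + a$2 * v$2 + a$3 * v$3 + a$4 * v$4"
  have "v \<in> hyp a \<longleftrightarrow> a$0 * v$0 + ?S = 0" by (simp add: hyp_def dot5_expand algebra_simps)
  also have "\<dots> \<longleftrightarrow> v$0 = ?S / a$0" using a0 c2 by (auto simp: char2_add_eq_0_iff field_simps)
  also have "\<dots> \<longleftrightarrow> v \<in> hypB (hypB_param a)"
    using a0 by (simp add: hypB_def Bp_def hypB_param_def field_simps)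
  finally show "v \<in> hyp a \<longleftrightarrow> v \<in> hypB (hypB_param a)" .
qed

lemma elliptic_ovoid_iff:
  assumes c2: "(2::'a::{field,finite}) = 0"
  shows "elliptic_ovoid (Y::('a^5) set set) \<longleftrightarrow> (\<exists>b. no_singular_line b \<and> Y = ovoid_of b)"
proof
  assume "elliptic_ovoid Y"
  then obtain a where e: "elliptic_hyp a"
    and Y: "Y = {proj_pt v | v. v \<noteq> 0 \<and> v \<in> hyp a \<and> Qf v = 0}"
    unfolding elliptic_ovoid_def by blast
  have a: "a \<noteq> 0" "hyp a = hypB (hypB_param a)"
    using e hyp_hypB_param[OF c2 elliptic_hyp_avoids_nucleus[OF c2 e]]
    by (auto simp: elliptic_hyp_def)
  then have "no_singular_line (hypB_param a)"
    using e elliptic_hyp_iff_no_singular_line[OF c2] by blast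
  moreover have "Y = ovoid_of (hypB_param a)" using Y a(2) by (simp add: ovoid_of_def)
  ultimately show "\<exists>b. no_singular_line b \<and> Y = ovoid_of b" by blast
next
  assume "\<exists>b. no_singular_line b \<and> Y = ovoid_of b"
  then obtain b where b: "no_singular_line b" "Y = ovoid_of b" by blast
  have "hypB_coords b \<noteq> 0" by (simp add: hypB_coords_def vec5_eq_iff)
  then have "elliptic_hyp (hypB_coords b)"
    using b(1) elliptic_hyp_iff_no_singular_line[OF c2 _ hyp_hypB_coords[OF c2]] by blast
  then show "elliptic_ovoid Y"
    unfolding elliptic_ovoid_def b(2) ovoid_of_def hyp_hypB_coords[OF c2, symmetric] by blast
qed

section \<open>The pole of two hyperplanes\<close>

text \<open>It lies in hypB a as well and is orthogonal to the
  whole plane hypB a \<inter> hypB c; it is the nucleus of the conic (or point) in which the two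
  ovoids meet.\<close>
definition pole :: "'a::field^5 \<Rightarrow> 'a^5 \<Rightarrow> 'a^5" where
  "pole a c = lift c (a + c)"

lemma pole_in_hypB:
  assumes c2: "(2::'a::field) = 0"
  shows "pole a c \<in> hypB a" "pole a c \<in> hypB (c::'a^5)"
proof -
  have "Bp a (pole a c) = Bp a c"
    unfolding pole_def Bp_lift_right by (simp add: Bp_add_right Bp_self[OF c2])
  moreover have "(pole a c)$0 = Bp c (a + c)" by (simp add: pole_def lift_nth0)
  ultimately show "pole a c \<in> hypB a"
    by (simp add: hypB_def Bp_add_right Bp_self[OF c2] Bp_sym[of c a])
  show "pole a c \<in> hypB c" unfolding pole_def by (rule lift_in_hypB)
qed

lemma pole_perp:
  assumes c2: "(2::'a::field) = 0" and "w \<in> hypB a" "w \<in> hypB (c::'a^5)"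
  shows "Bp (pole a c) w = 0"
  using assms by (simp add: pole_def Bp_lift_left Bp_add_left hypB_def char2_add_self)

lemma pole_nonzero:
  assumes c2: "(2::'a::field) = 0" and "hypB a \<noteq> hypB (c::'a^5)"
  shows "pole a c \<noteq> 0"
proof
  assume "pole a c = 0"
  then have "a$i + c$i = 0" if "i \<in> {1, 2, 3, 4}" for i
    using that by (auto simp: pole_def lift_def vec5_eq_iff)
  then have "hypB a = hypB c" using c2 by (intro hypB_cong) (simp_all add: char2_add_eq_0_iff)
  then show False using assms(2) by simp
qed

text \<open>If r is the only singular point of a subspace S, then r is orthogonal to S: for R \<in> S
  with Bp r R \<noteq> 0 one of R, r + t R (with t = Bp r R / Qf R) would be another singular point.\<close>
lemma unique_singular_point_perp:
  assumes c2: "(2::'a::field) = 0"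
    and add: "\<And>u v. u \<in> S \<Longrightarrow> v \<in> S \<Longrightarrow> u + v \<in> S"
    and smul: "\<And>c u. u \<in> S \<Longrightarrow> smul5 c u \<in> S"
    and r: "r \<in> S" "Qf r = 0"
    and uniq: "\<And>w. w \<in> S \<Longrightarrow> w \<noteq> 0 \<Longrightarrow> Qf w = 0 \<Longrightarrow> \<exists>k. w = smul5 k (r::'a^5)"
    and R: "R \<in> S"
  shows "Bp r R = 0"
proof (rule ccontr)
  assume nb: "Bp r R \<noteq> 0"
  have on_r: "Bp r w = 0" if "w \<in> S" "w \<noteq> 0" "Qf w = 0" for w
    using uniq[OF that] Bp_self[OF c2, of r] by (auto simp: Bp_smul_right)
  show False
  proof (cases "Qf R = 0")
    case True
    then show False using on_r[OF R _ True] nb by (cases "R = 0") auto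
  next
    case False
    define t where "t = Bp r R / Qf R"
    define w where "w = r + smul5 t R"
    have "t \<noteq> 0" "t * Qf R = Bp r R" using nb False by (simp_all add: t_def)
    have "w \<in> S" unfolding w_def using r R by (intro add smul)
    have "Qf w = t^2 * Qf R + t * Bp r R"
      using r Qf_lincomb[of 1 r t R] by (simp add: w_def Bf_char2[OF c2])
    also have "\<dots> = 0" using \<open>t * Qf R = Bp r R\<close> c2
      by (simp add: power2_eq_square mult.assoc char2_add_self)
    finally have "Qf w = 0" .
    moreover have "Bp r w = t * Bp r R"
      by (simp add: w_def Bp_add_right Bp_smul_right Bp_self[OF c2])
    ultimately show False using on_r[OF \<open>w \<in> S\<close>] \<open>t \<noteq> 0\<close> nb by (cases "w = 0") auto
  qed
qed

lemma tangent_iff_singleton: "tangent X Y \<longleftrightarrow> X \<noteq> Y \<and> (\<exists>p. X \<inter> Y = {p})"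
  unfolding tangent_def by blast

lemma tangent_point_is_pole:
  assumes c2: "(2::'a::field) = 0" and t: "tangent (ovoid_of a) (ovoid_of (c::'a^5))"
  shows "ovoid_of a \<inter> ovoid_of c = {proj_pt (pole a c)}"
proof -
  define d where "d = pole a c"
  have "hypB a \<noteq> hypB c"
  proof
    assume "hypB a = hypB c"
    then have "ovoid_of a = ovoid_of c" by (simp add: ovoid_of_def)
    then show False using t by (simp add: tangent_def)
  qed
  then have d: "d \<noteq> 0" "d \<in> hypB c"
    using pole_nonzero[OF c2] pole_in_hypB[OF c2] by (auto simp: d_def)
  obtain p where p: "ovoid_of a \<inter> ovoid_of c = {p}" using t by (auto simp: tangent_iff_singleton)
  then have "p \<in> ovoid_of a" "p \<in> ovoid_of c" by blast+
  then obtain r where r: "p = proj_pt r" "r \<noteq> 0" "r \<in> hypB a" "Qf r = 0"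
    by (elim ovoid_of_elem)
  have rc: "r \<in> hypB c" using \<open>p \<in> ovoid_of c\<close> r(1) by (simp add: proj_pt_in_ovoid_of)
  have uniq: "\<exists>k. w = smul5 k r" if "w \<in> hypB a \<inter> hypB c" "w \<noteq> 0" "Qf w = 0" for w
  proof -
    have "proj_pt w \<in> ovoid_of a \<inter> ovoid_of c" using that by (simp add: proj_pt_in_ovoid_of)
    then have "proj_pt w = proj_pt r" using p r(1) by blast
    then show ?thesis using proj_pt_eqD by blast
  qed
  have perp: "Bp r R = 0" if R: "R \<in> hypB a \<inter> hypB c" for R
    by (rule unique_singular_point_perp[OF c2 _ _ _ r(4) uniq R])
      (simp_all add: hypB_add hypB_smul5 r(3) rc)
  have perp_d: "Bp r R = 0" if "Bp d R = 0" for R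
  proof -
    have "Bp a R = Bp c R"
      using that c2 by (simp add: d_def pole_def Bp_lift_left Bp_add_left char2_add_eq_0_iff)
    then have "lift a R \<in> hypB a \<inter> hypB c" by (simp add: lift_in_hypB_iff)
    then have "Bp r (lift a R) = 0" by (rule perp)
    then show ?thesis by (simp add: Bp_lift_right)
  qed
  obtain k where k: "r = smul5 k d" using hypB_perp_proportional[OF rc d(2) d(1) perp_d] by blast
  then have "k \<noteq> 0" using r(2) by auto
  then have "p = proj_pt d" using r(1) k by (simp add: proj_pt_smul5)
  then show ?thesis using p by (simp add: d_def)
qed

text \<open>Conversely, if the pole is singular and one hyperplane is elliptic, the ovoids meet only
  in the pole: every common singular point is orthogonal to it.\<close>
lemma pole_is_tangent_point:
  assumes c2: "(2::'a::field) = 0" and nsl: "no_singular_line c"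
    and d: "pole a c \<noteq> 0" "Qf (pole a (c::'a^5)) = 0"
  shows "ovoid_of a \<inter> ovoid_of c = {proj_pt (pole a c)}"
proof (intro equalityI subsetI)
  fix q assume q: "q \<in> ovoid_of a \<inter> ovoid_of c"
  then obtain w where w: "q = proj_pt w" "w \<noteq> 0" "w \<in> hypB a" "Qf w = 0"
    by (auto elim: ovoid_of_elem)
  then have "w \<in> hypB c" using q by (simp add: proj_pt_in_ovoid_of)
  then have "Bp (pole a c) w = 0" using pole_perp[OF c2 w(3)] by blast
  then obtain k where k: "w = smul5 k (pole a c)"
    using no_singular_lineD[OF nsl pole_in_hypB(2)[OF c2] \<open>w \<in> hypB c\<close> d w(4)] by blast
  then have "k \<noteq> 0" using w(2) by auto
  then show "q \<in> {proj_pt (pole a c)}" using w(1) k by (simp add: proj_pt_smul5)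
next
  fix q assume "q \<in> {proj_pt (pole a c)}"
  then show "q \<in> ovoid_of a \<inter> ovoid_of c"
    using d pole_in_hypB[OF c2] by (simp add: proj_pt_in_ovoid_of)
qed

lemma tangent_pole_singular:
  assumes c2: "(2::'a::field) = 0" and "tangent (ovoid_of a) (ovoid_of (c::'a^5))"
  shows "Qf (pole a c) = 0"
proof -
  have "proj_pt (pole a c) \<in> ovoid_of a" using tangent_point_is_pole[OF assms] by blast
  then show ?thesis by (simp add: proj_pt_in_ovoid_of)
qed

text \<open>Moving b along a vector x of hypB b: the pole of b + m x and b is m x, so for singular x
  and m \<noteq> 0 the ovoids of b + m x and b touch exactly at x.\<close>
lemma pole_shift:
  assumes c2: "(2::'a::field) = 0" and x: "x \<in> hypB (b::'a^5)"
  shows "pole (b + smul5 m x) b = smul5 m x"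
proof -
  have "b + b = 0" using c2 by (simp add: vec_eq_iff char2_add_self)
  have "b + smul5 m x + b = smul5 m x + (b + b)" by (simp add: algebra_simps)
  also have "\<dots> = smul5 m x" using \<open>b + b = 0\<close> by simp
  finally have "pole (b + smul5 m x) b = lift b (smul5 m x)" by (simp add: pole_def)
  also have "\<dots> = smul5 m x"
    using x by (simp add: lift_def vec5_eq_iff hypB_def Bp_smul_right)
  finally show ?thesis .
qed

lemma pole_eq_smul5_imp_hypB:
  assumes c2: "(2::'a::field) = 0" and "pole a c = smul5 k (v::'a^5)"
  shows "hypB a = hypB (c + smul5 k v)"
proof -
  have "a$i + c$i = k * v$i" if "i \<in> {1, 2, 3, 4}" for i
    using assms(2) that by (auto simp: pole_def lift_def vec5_eq_iff)
  then show ?thesis using c2 by (intro hypB_cong) (simp_all add: char2_add_eq_iff)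
qed

lemma Qf_pole_shift:
  assumes c2: "(2::'a::field) = 0" and x: "x \<in> hypB b" "Qf x = 0"
    and bc: "Qf (pole b (c::'a^5)) = 0"
  shows "Qf (pole (b + smul5 m x) c) = (m * Bp (b + c) x)^2 + m * Bp (b + c) x"
proof -
  define A where "A = Bp c (b + c)"
  define P where "P = phi (b + c)"
  define T where "T = Bp b x"
  define G where "G = Bp c x"
  define F where "F = phi x"
  have AP: "A^2 + P = 0" using bc by (simp add: pole_def Qf_lift A_def P_def)
  have TF: "T^2 + F = 0" using Qf_hypB[OF x(1)] x(2) by (simp add: T_def F_def)
  have sum: "b + smul5 m x + c = (b + c) + smul5 m x" by (simp add: algebra_simps)
  have "Qf (pole (b + smul5 m x) c)
      = (Bp c ((b + c) + smul5 m x))^2 + phi ((b + c) + smul5 m x)"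
    by (simp only: pole_def Qf_lift sum)
  also have "\<dots> = (A + m * G)^2 + (P + m^2 * F + m * (T + G))"
    by (simp add: phi_add phi_smul Bp_add_left Bp_add_right Bp_smul_right
        A_def P_def T_def G_def F_def algebra_simps)
  also have "\<dots> = (A^2 + P) + m^2 * (T^2 + F) + (m * (T + G))^2 + m * (T + G)
                    + 2 * (m * A * G - m^2 * T^2 - m^2 * T * G)"
    by algebra
  also have "\<dots> = (m * (T + G))^2 + m * (T + G)" using AP TF c2 by simp
  finally show ?thesis by (simp add: T_def G_def Bp_add_left)
qed

text \<open>Ellipticity survives the move: a singular line in hypB (b + m x) would, after
  subtracting a suitable combination, produce a second singular point of hypB b orthogonal
  to x.\<close>
lemma no_singular_line_shift:
  assumes c2: "(2::'a::field) = 0" and nsl: "no_singular_line b"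
    and x: "x \<noteq> 0" "x \<in> hypB b" "Qf x = (0::'a)"
  shows "no_singular_line (b + smul5 m x)"
  unfolding no_singular_line_def
proof (intro ballI impI)
  fix z y
  assume zy: "z \<in> hypB (b + smul5 m x)" "y \<in> hypB (b + smul5 m x)"
    and sing: "z \<noteq> 0 \<and> Qf z = 0 \<and> Qf y = 0 \<and> Bp z y = 0"
  have to_b: "w \<in> hypB b" if "w \<in> hypB (b + smul5 m x)" "Bp x w = 0" for w
    using that by (simp add: hypB_def Bp_add_left Bp_smul_left)
  define w where "w = smul5 (Bp x y) z + smul5 (Bp x z) y"
  have w_e: "w \<in> hypB (b + smul5 m x)" using zy by (simp add: w_def hypB_add hypB_smul5)
  have Qw: "Qf w = 0" using sing by (simp add: w_def Qf_lincomb Bf_char2[OF c2])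
  have xw: "Bp x w = 0"
    using c2 by (simp add: w_def Bp_add_right Bp_smul_right char2_add_self mult.commute)
  have wz: "Bp w z = 0" and wy: "Bp w y = 0"
    using sing Bp_self[OF c2, of z] Bp_self[OF c2, of y]
    by (simp_all add: w_def Bp_add_left Bp_smul_left Bp_sym[of y z])
  have "w = 0"
  proof (rule ccontr)
    assume "w \<noteq> 0"
    obtain k where k: "w = smul5 k x"
      using no_singular_lineD[OF nsl x(2) to_b[OF w_e xw] x(1,3) Qw xw] by blast
    with \<open>w \<noteq> 0\<close> have "k \<noteq> 0" by auto
    then have "Bp x z = 0" "Bp x y = 0" using wz wy k by (simp_all add: Bp_smul_left)
    then have "w = 0" by (simp add: w_def)
    with \<open>w \<noteq> 0\<close> show False ..
  qed
  have coords: "Bp x z * y$i = Bp x y * z$i" for i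
  proof -
    have "Bp x y * z$i + Bp x z * y$i = 0" using arg_cong[OF \<open>w = 0\<close>, of "\<lambda>v. v$i"]
      by (simp add: w_def)
    then show ?thesis by (simp add: char2_add_eq_0_iff[OF c2])
  qed
  show "\<exists>c. y = smul5 c z"
  proof (cases "Bp x z = 0")
    case True
    then have "Bp x y = 0" using coords sing by (auto simp: vec_eq_iff)
    then show ?thesis
      using no_singular_lineD[OF nsl to_b[OF zy(1) True] to_b[OF zy(2)]] sing by blast
  next
    case False
    then have "y = smul5 (Bp x y / Bp x z) z"
      using coords by (simp add: vec_eq_iff field_simps mult.commute)
    then show ?thesis ..
  qed
qed

section \<open>The ovoid through x tangent to two tangent ovoids\<close>

definition tangent_centre :: "'a::field^5 \<Rightarrow> 'a^5 \<Rightarrow> 'a^5 \<Rightarrow> 'a^5" where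
  "tangent_centre b c x = b + smul5 (1 / Bp (b + c) x) x"

lemma Bp_sum_nonzero:
  assumes c2: "(2::'a::field) = 0" and "x \<in> hypB b" "x \<notin> hypB (c::'a^5)"
  shows "Bp (b + c) x \<noteq> 0"
  using assms by (simp add: hypB_def Bp_add_left char2_add_eq_0_iff)

lemma tangent_centre_works:
  assumes c2: "(2::'a::field) = 0"
    and nsl: "no_singular_line b" "no_singular_line c"
    and t: "tangent (ovoid_of b) (ovoid_of c)"
    and x: "x \<noteq> 0" "x \<in> hypB b" "Qf x = 0" "x \<notin> hypB (c::'a^5)"
  defines "e \<equiv> tangent_centre b c x"
  shows "no_singular_line e \<and> proj_pt x \<in> ovoid_of e
    \<and> tangent (ovoid_of e) (ovoid_of b) \<and> tangent (ovoid_of e) (ovoid_of c)"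
proof -
  define s where "s = Bp (b + c) x"
  have "s \<noteq> 0" unfolding s_def using Bp_sum_nonzero[OF c2 x(2,4)] .
  have e: "e = b + smul5 (1 / s) x" by (simp add: e_def tangent_centre_def s_def)
  have nsl_e: "no_singular_line e" unfolding e by (rule no_singular_line_shift[OF c2 nsl(1) x(1-3)])
  have pole_eb: "pole e b = smul5 (1 / s) x" unfolding e by (rule pole_shift[OF c2 x(2)])
  have "smul5 s (pole e b) \<in> hypB e" by (intro hypB_smul5 pole_in_hypB[OF c2])
  then have xe: "x \<in> hypB e" using \<open>s \<noteq> 0\<close> by (simp add: pole_eb)
  have meet_b: "ovoid_of e \<inter> ovoid_of b = {proj_pt x}"
    using pole_is_tangent_point[OF c2 nsl(1), of e] x(1,3) \<open>s \<noteq> 0\<close>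
    by (simp add: pole_eb Qf_smul5 proj_pt_smul5)
  have "pole e c \<noteq> 0" using xe x(4) pole_nonzero[OF c2] by blast
  moreover have "Qf (pole e c) = (1 / s * s)^2 + 1 / s * s"
    unfolding e s_def by (rule Qf_pole_shift[OF c2 x(2,3) tangent_pole_singular[OF c2 t]])
  then have "Qf (pole e c) = 0" using \<open>s \<noteq> 0\<close> c2 by simp
  ultimately have meet_c: "ovoid_of e \<inter> ovoid_of c = {proj_pt (pole e c)}"
    by (rule pole_is_tangent_point[OF c2 nsl(2)])
  have xe': "proj_pt x \<in> ovoid_of e" and xc: "proj_pt x \<notin> ovoid_of c"
    using x xe by (simp_all add: proj_pt_in_ovoid_of)
  have "ovoid_of e \<noteq> ovoid_of b"
  proof
    assume eb: "ovoid_of e = ovoid_of b"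
    have p: "proj_pt (pole b c) \<in> ovoid_of b \<inter> ovoid_of c"
      using tangent_point_is_pole[OF c2 t] by blast
    have "ovoid_of b = {proj_pt x}" using meet_b unfolding eb by simp
    then have "proj_pt (pole b c) = proj_pt x" using p by blast
    then show False using p xc by simp
  qed
  moreover have "ovoid_of e \<noteq> ovoid_of c" using xe' xc by blast
  ultimately show ?thesis using nsl_e xe' meet_b meet_c by (auto simp: tangent_iff_singleton)
qed

text \<open>Uniqueness: tangency to the ovoid of b at x forces the form b + k x, and tangency to the
  ovoid of c forces (k s)^2 + k s = 0, i.e. k = 1/s.\<close>
lemma tangent_centre_unique:
  assumes c2: "(2::'a::field) = 0"
    and t: "tangent (ovoid_of b) (ovoid_of c)"
    and x: "x \<noteq> 0" "x \<in> hypB b" "Qf x = 0" "x \<notin> hypB (c::'a^5)"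
    and e: "proj_pt x \<in> ovoid_of e" "tangent (ovoid_of e) (ovoid_of b)"
      "tangent (ovoid_of e) (ovoid_of c)"
  shows "ovoid_of e = ovoid_of (tangent_centre b c x)"
proof -
  define s where "s = Bp (b + c) x"
  have "s \<noteq> 0" unfolding s_def using Bp_sum_nonzero[OF c2 x(2,4)] .
  have "proj_pt x \<in> ovoid_of e \<inter> ovoid_of b" using e(1) x by (simp add: proj_pt_in_ovoid_of)
  then have "proj_pt x = proj_pt (pole e b)" using tangent_point_is_pole[OF c2 e(2)] by blast
  then obtain k where "k \<noteq> 0" "pole e b = smul5 k x" using proj_pt_eqD by metis
  then have ek: "ovoid_of e = ovoid_of (b + smul5 k x)"
    using pole_eq_smul5_imp_hypB[OF c2] by (simp add: ovoid_of_def)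
  have "(k * s)^2 + k * s = 0"
    using Qf_pole_shift[OF c2 x(2,3) tangent_pole_singular[OF c2 t], of k]
      tangent_pole_singular[OF c2 e(3)[unfolded ek]] by (simp add: s_def)
  then have "k * s * (k * s + 1) = 0" by (simp add: power2_eq_square algebra_simps)
  then have "k * s = 1" using \<open>k \<noteq> 0\<close> \<open>s \<noteq> 0\<close> c2 by (simp add: char2_add_eq_0_iff)
  then have "k = 1 / s" using \<open>s \<noteq> 0\<close> by (simp add: field_simps)
  then show ?thesis using ek by (simp add: tangent_centre_def s_def)
qed

theorem mainTheorem4:
  fixes X1 X2 :: "('a::{field,finite} ^ 5) set set" and x :: "('a ^ 5) set" and n :: nat
  assumes "CARD('a) = 2 ^ n"
    and "elliptic_ovoid X1" and "elliptic_ovoid X2" and "tangent X1 X2"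
    and "x \<in> X1" and "x \<notin> X2"
  shows "\<exists>!X. elliptic_ovoid X \<and> x \<in> X \<and> tangent X X1 \<and> tangent X X2"
proof -
  have c2: "(2::'a) = 0" using assms(1) by (rule char2_of_card)
  obtain b c where b: "no_singular_line b" "X1 = ovoid_of b"
    and c: "no_singular_line c" "X2 = ovoid_of c"
    using assms(2,3) elliptic_ovoid_iff[OF c2] by metis
  obtain v where v: "x = proj_pt v" "v \<noteq> 0" "v \<in> hypB b" "Qf v = 0"
    using assms(5) b(2) by (auto elim: ovoid_of_elem)
  have "v \<notin> hypB c" using assms(6) c(2) v by (simp add: proj_pt_in_ovoid_of)
  note hyps = assms(4)[unfolded b(2) c(2)] v(2-4) this
  define X where "X = ovoid_of (tangent_centre b c v)"
  show ?thesis
  proof (rule ex1I[of _ X])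
    show "elliptic_ovoid X \<and> x \<in> X \<and> tangent X X1 \<and> tangent X X2"
      using tangent_centre_works[OF c2 b(1) c(1) hyps] elliptic_ovoid_iff[OF c2] b(2) c(2) v(1)
      unfolding X_def by blast
  next
    fix Y assume Y: "elliptic_ovoid Y \<and> x \<in> Y \<and> tangent Y X1 \<and> tangent Y X2"
    then obtain e where "Y = ovoid_of e" using elliptic_ovoid_iff[OF c2] by blast
    then show "Y = X" using tangent_centre_unique[OF c2 hyps, of e] Y b(2) c(2) v(1)
      unfolding X_def by blast
  qed
qed

end
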